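(* Let $G$ be a compact Lie group acting linearly and unitarily on $\mathbb{C}^n$ with moment map $\mu:\mathbb{C}^n\to\mathfrak{g}^*$, let $\alpha\in\mathfrak{g}^*$ be central, and let $\mathfrak{M}=(\mu_{\mathbb{R}}^{-1}(\alpha)\cap\mu_{\mathbb{C}}^{-1}(0))/G$ with the function $\Phi:\mathfrak{M}\to\mathbb{R}$, $\Phi[z,w]=\tfrac12|w|^2$. If $\mu$ is proper, then $\Phi$ is proper.
   Context: $T^*\mathbb{C}^n=\mathbb{C}^n\times(\mathbb{C}^n)^*$ with points $(z,w)$; $G$ acts on it by the induced action, with real moment map $\mu_{\mathbb{R}}(z,w)=\mu(z)-\mu(w)\in\mathfrak{g}^*$ and complex moment map $\mu_{\mathbb{C}}(z,w)(v)=w(\hat v_z)$ for $v\in\mathfrak{g}_{\mathbb{C}}$, $\hat v_z$ the induced tangent vector at $z$. $[z,w]$ denotes the $G$-orbit of $(z,w)$. The function $\Phi$ is the moment map for the circle action $\tau\cdot[z,w]=[z,\tau w]$, $\tau\in S^1$. *)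

theory Defs
  imports "HOL-Analysis.Analysis"
begin

text \<open>C^n is modelled as complex^'n; a linear unitary action of a compact Lie group is
  modelled by its image, a compact subgroup G of U(n) (a set of unitary matrices).
  A covector w in (C^n)^* is given by its coefficient vector: w(u) = sum_i w_i u_i.\<close>

definition adjoint_mat :: "complex^'n^'n \<Rightarrow> complex^'n^'n" where
  "adjoint_mat A = (\<chi> i j. cnj (A $ j $ i))"

definition unitary_mat :: "complex^'n^'n \<Rightarrow> bool" where
  "unitary_mat A \<longleftrightarrow> A ** adjoint_mat A = mat 1 \<and> adjoint_mat A ** A = mat 1"

definition compact_unitary_group :: "(complex^'n^'n) set \<Rightarrow> bool" where
  "compact_unitary_group G \<longleftrightarrow>
     mat 1 \<in> G \<and> (\<forall>g\<in>G. \<forall>h\<in>G. g ** h \<in> G) \<and> (\<forall>g\<in>G. matrix_inv g \<in> G)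
     \<and> (\<forall>g\<in>G. unitary_mat g) \<and> compact G"

definition lie_alg :: "(complex^'n^'n) set \<Rightarrow> (complex^'n^'n) set" where
  "lie_alg G = {X. \<exists>c::real \<Rightarrow> complex^'n^'n. c 0 = mat 1 \<and> (\<forall>t. c t \<in> G)
                    \<and> (c has_vector_derivative X) (at 0)}"

definition lie_alg_C :: "(complex^'n^'n) set \<Rightarrow> (complex^'n^'n) set" where
  "lie_alg_C G = {X + (\<chi> i j. \<i> * Y $ i $ j) | X Y. X \<in> lie_alg G \<and> Y \<in> lie_alg G}"

definition herm :: "complex^'n \<Rightarrow> complex^'n \<Rightarrow> complex" where
  "herm u v = (\<Sum>i\<in>UNIV. cnj (u $ i) * v $ i)"

text \<open>Moment map of the unitary action on C^n: mu(z)(X) = (i/2) z^* X z (real for X in u(n)).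
  Elements of g^* are represented by functions on matrices, only their values on g matter.\<close>
definition mu :: "complex^'n \<Rightarrow> complex^'n^'n \<Rightarrow> real" where
  "mu z X = Re (\<i> / 2 * herm z (X *v z))"

text \<open>mu(w) for a covector w: apply mu to the vector corresponding to w under the Hermitian metric.\<close>
definition mu_dual :: "complex^'n \<Rightarrow> complex^'n^'n \<Rightarrow> real" where
  "mu_dual w = mu (\<chi> i. cnj (w $ i))"

definition mu_R :: "complex^'n \<Rightarrow> complex^'n \<Rightarrow> complex^'n^'n \<Rightarrow> real" where
  "mu_R z w X = mu z X - mu_dual w X"

definition mu_C :: "complex^'n \<Rightarrow> complex^'n \<Rightarrow> complex^'n^'n \<Rightarrow> complex" where
  "mu_C z w X = (\<Sum>i\<in>UNIV. w $ i * (X *v z) $ i)"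

definition level_set :: "(complex^'n^'n) set \<Rightarrow> (complex^'n^'n \<Rightarrow> real)
                          \<Rightarrow> ((complex^'n) \<times> (complex^'n)) set" where
  "level_set G \<alpha> = {(z, w). (\<forall>X\<in>lie_alg G. mu_R z w X = \<alpha> X) \<and> (\<forall>X\<in>lie_alg_C G. mu_C z w X = 0)}"

text \<open>Induced action on T^*C^n: g.(z,w) = (g z, w o g^{-1}).\<close>
definition orbit :: "(complex^'n^'n) set \<Rightarrow> (complex^'n) \<times> (complex^'n)
                       \<Rightarrow> ((complex^'n) \<times> (complex^'n)) set" where
  "orbit G p = {(g *v fst p, transpose (matrix_inv g) *v snd p) | g. g \<in> G}"

definition hk_quotient :: "(complex^'n^'n) set \<Rightarrow> (complex^'n^'n \<Rightarrow> real)
                            \<Rightarrow> ((complex^'n) \<times> (complex^'n)) set set" where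
  "hk_quotient G \<alpha> = orbit G ` level_set G \<alpha>"

definition hk_quotient_top :: "(complex^'n^'n) set \<Rightarrow> (complex^'n^'n \<Rightarrow> real)
                                \<Rightarrow> ((complex^'n) \<times> (complex^'n)) set topology" where
  "hk_quotient_top G \<alpha> = topology (\<lambda>U. U \<subseteq> hk_quotient G \<alpha> \<and>
        openin (top_of_set (level_set G \<alpha>)) (\<Union>U))"

text \<open>Phi[z,w] = |w|^2 / 2 (well defined since G acts unitarily).\<close>
definition Phi :: "((complex^'n) \<times> (complex^'n)) set \<Rightarrow> real" where
  "Phi Q = (let p = (SOME p. p \<in> Q) in norm (snd p) ^ 2 / 2)"

definition proper_fn :: "'a topology \<Rightarrow> 'b topology \<Rightarrow> ('a \<Rightarrow> 'b) \<Rightarrow> bool" where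
  "proper_fn X Y f \<longleftrightarrow> (\<forall>K. compactin Y K \<longrightarrow> compactin X {x \<in> topspace X. f x \<in> K})"

text \<open>g^* topologised as functions on g with pointwise (= norm, finite dimension) topology.\<close>
definition dual_top :: "(complex^'n^'n) set \<Rightarrow> (complex^'n^'n \<Rightarrow> real) topology" where
  "dual_top G = product_topology (\<lambda>_. euclideanreal) (lie_alg G)"

definition central :: "(complex^'n^'n) set \<Rightarrow> (complex^'n^'n \<Rightarrow> real) \<Rightarrow> bool" where
  "central G \<alpha> \<longleftrightarrow>
     (\<forall>X\<in>lie_alg G. \<forall>Y\<in>lie_alg G. \<forall>a b::real.
        \<alpha> (a *\<^sub>R X + b *\<^sub>R Y) = a * \<alpha> X + b * \<alpha> Y)
     \<and> (\<forall>g\<in>G. \<forall>X\<in>lie_alg G. \<alpha> (g ** X ** matrix_inv g) = \<alpha> X)"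

end

theory Submission
  imports Defs
begin

(* On the level set the real moment map equation reads mu z = alpha + mu(w) on the Lie algebra.
   If |w|^2/2 stays in a compact set, |w| is bounded, hence so is mu(w), hence mu z lies in a
   compact box of g^*; properness of mu makes the z-components range over a compact set too.
   So the preimage of a compact set under (z,w) |-> |w|^2/2 is a closed subset of a compact
   product, i.e. compact, and its image in the quotient, which is the preimage under Phi because
   G acts unitarily on w, is compact by continuity of the orbit map. Centrality of alpha makes
   the level set G-invariant, so the orbits partition it. *)

definition cnj_vec :: "complex^'n \<Rightarrow> complex^'n" where
  "cnj_vec v = (\<chi> i. cnj (v $ i))"

definition cnj_mat :: "complex^'n^'m \<Rightarrow> complex^'n^'m" where
  "cnj_mat A = (\<chi> i j. cnj (A $ i $ j))"

lemma cnj_vec_cnj_vec [simp]: "cnj_vec (cnj_vec v) = v"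
  by (simp add: cnj_vec_def vec_eq_iff)

lemma norm_cnj_vec [simp]: "norm (cnj_vec v) = norm v"
  by (simp add: cnj_vec_def norm_vec_def)

lemma cnj_mat_1 [simp]: "cnj_mat (mat 1 :: complex^'n^'n) = mat 1"
  by (simp add: cnj_mat_def mat_def vec_eq_iff)

lemma cnj_mat_mult: "cnj_mat (A ** B) = cnj_mat A ** cnj_mat B"
  by (simp add: cnj_mat_def matrix_matrix_mult_def vec_eq_iff)

lemma cnj_mat_vector_mult: "cnj_mat A *v w = cnj_vec (A *v cnj_vec w)"
  by (simp add: cnj_mat_def cnj_vec_def matrix_vector_mult_def vec_eq_iff)

lemma adjoint_mat_adjoint_mat [simp]: "adjoint_mat (adjoint_mat A) = A"
  by (simp add: adjoint_mat_def vec_eq_iff)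

lemma transpose_adjoint_mat: "transpose (adjoint_mat A) = cnj_mat A"
  by (simp add: adjoint_mat_def transpose_def cnj_mat_def vec_eq_iff)

lemma matrix_inv_eq:
  fixes A B :: "'a::comm_ring_1^'n^'n"
  assumes "A ** B = mat 1" "B ** A = mat 1"
  shows "matrix_inv A = B"
proof -
  have "A ** matrix_inv A = mat 1 \<and> matrix_inv A ** A = mat 1"
    unfolding matrix_inv_def by (rule someI[of _ B]) (use assms in auto)
  then show ?thesis
    by (metis assms(2) matrix_mul_assoc matrix_mul_lid matrix_mul_rid)
qed

lemma unitary_matrix_inv: "unitary_mat A \<Longrightarrow> matrix_inv A = adjoint_mat A"
  unfolding unitary_mat_def by (simp add: matrix_inv_eq)

lemma unitary_adjoint_mat: "unitary_mat A \<Longrightarrow> unitary_mat (adjoint_mat A)"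
  unfolding unitary_mat_def by simp

lemma herm_matrix_vector_mult: "herm u (A *v v) = herm (adjoint_mat A *v u) v"
proof -
  have "herm u (A *v v) = (\<Sum>i\<in>UNIV. \<Sum>j\<in>UNIV. cnj (u$i) * A$i$j * v$j)"
    unfolding herm_def matrix_vector_mult_def by (simp add: sum_distrib_left mult.assoc)
  also have "\<dots> = (\<Sum>j\<in>UNIV. \<Sum>i\<in>UNIV. cnj (u$i) * A$i$j * v$j)"
    by (rule sum.swap)
  also have "\<dots> = herm (adjoint_mat A *v u) v"
    unfolding herm_def adjoint_mat_def matrix_vector_mult_def
    by (simp add: sum_distrib_left sum_distrib_right mult.commute mult.left_commute)
  finally show ?thesis .
qed

lemma norm_power2_eq_herm: "norm v ^ 2 = Re (herm v v)"
proof -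
  have "herm v v = (\<Sum>i\<in>UNIV. complex_of_real (norm (v$i) ^ 2))"
    unfolding herm_def by (intro sum.cong refl) (metis complex_norm_square mult.commute)
  then have "Re (herm v v) = (\<Sum>i\<in>UNIV. norm (v$i) ^ 2)"
    by (simp add: Re_sum)
  then show ?thesis
    by (simp add: norm_vec_def L2_set_def sum_nonneg)
qed

lemma unitary_norm_matrix_vector_mult:
  assumes "unitary_mat A"
  shows "norm (A *v v) = norm v"
proof -
  have "herm (A *v v) (A *v v) = herm v v"
    using assms by (simp add: herm_matrix_vector_mult matrix_vector_mul_assoc unitary_mat_def)
  then have "norm (A *v v) ^ 2 = norm v ^ 2"
    by (simp add: norm_power2_eq_herm)
  then show ?thesis
    by (simp add: power2_eq_iff_nonneg)
qed

lemma unitary_norm_cnj_mat_vector_mult: "unitary_mat A \<Longrightarrow> norm (cnj_mat A *v w) = norm w"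
  by (simp add: cnj_mat_vector_mult unitary_norm_matrix_vector_mult)

lemma matrix_add_rdistrib: "(B + C) ** A = B ** A + C ** (A :: 'a::semiring_1^_^_)"
  by (vector matrix_matrix_mult_def sum.distrib[symmetric] field_simps)

lemma bounded_linear_matrix_sandwich:
  fixes A B :: "complex^'n^'n"
  shows "bounded_linear (\<lambda>M. A ** M ** B)"
proof -
  have "linear (\<lambda>M. A ** M ** B)"
    by (simp add: linear_iff matrix_add_ldistrib matrix_add_rdistrib matrix_scalar_ac
        scalar_matrix_assoc)
  then show ?thesis
    using linear_conv_bounded_linear by blast
qed

lemma matrix_mul_scale_right: "A ** (\<chi> i j. c * Y$i$j) = (\<chi> i j. c * (A ** Y)$i$j)"
  for A Y :: "complex^'n^'n"
  by (simp add: vec_eq_iff matrix_matrix_mult_def sum_distrib_left mult_ac)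

lemma matrix_mul_scale_left: "(\<chi> i j. c * Y$i$j) ** A = (\<chi> i j. c * (Y ** A)$i$j)"
  for A Y :: "complex^'n^'n"
  by (simp add: vec_eq_iff matrix_matrix_mult_def sum_distrib_left mult_ac)

lemma sum_transpose_matrix_vector_mult:
  fixes A :: "complex^'n^'n"
  shows "(\<Sum>i\<in>UNIV. (transpose A *v a)$i * b$i) = (\<Sum>i\<in>UNIV. a$i * (A *v b)$i)"
proof -
  have "(\<Sum>i\<in>UNIV. (transpose A *v a)$i * b$i) = (\<Sum>i\<in>UNIV. \<Sum>j\<in>UNIV. A$j$i * a$j * b$i)"
    unfolding matrix_vector_mult_def transpose_def by (simp add: sum_distrib_right)
  also have "\<dots> = (\<Sum>j\<in>UNIV. \<Sum>i\<in>UNIV. A$j$i * a$j * b$i)"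
    by (rule sum.swap)
  also have "\<dots> = (\<Sum>i\<in>UNIV. a$i * (A *v b)$i)"
    unfolding matrix_vector_mult_def by (simp add: sum_distrib_left mult.commute mult.left_commute)
  finally show ?thesis .
qed

lemma mu_matrix_vector_mult: "mu (A *v z) X = mu z (adjoint_mat A ** X ** A)"
proof -
  have "herm (A *v z) (X *v (A *v z)) = herm z ((adjoint_mat A ** X ** A) *v z)"
    using herm_matrix_vector_mult[of z "adjoint_mat A" "X *v (A *v z)"]
    by (simp add: matrix_vector_mul_assoc matrix_mul_assoc)
  then show ?thesis
    by (simp add: mu_def)
qed

lemma mu_dual_cnj_mat_vector_mult:
  "mu_dual (cnj_mat A *v w) X = mu_dual w (adjoint_mat A ** X ** A)"
  by (simp add: mu_dual_def cnj_vec_def[symmetric] cnj_mat_vector_mult mu_matrix_vector_mult)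

lemma mu_C_matrix_vector_mult:
  "mu_C (A *v z) (cnj_mat A *v w) X = mu_C z w (adjoint_mat A ** X ** A)"
  unfolding mu_C_def transpose_adjoint_mat[symmetric] sum_transpose_matrix_vector_mult
  by (simp add: matrix_vector_mul_assoc matrix_mul_assoc)

lemma continuous_on_mu_dual: "continuous_on S (\<lambda>w. mu_dual w X)"
  unfolding mu_dual_def mu_def herm_def matrix_vector_mult_def
  by (intro continuous_intros; simp)

lemma continuous_on_mu_R: "continuous_on S (\<lambda>p. mu_R (fst p) (snd p) X)"
  unfolding mu_R_def mu_dual_def mu_def herm_def matrix_vector_mult_def
  by (intro continuous_intros; simp)

lemma continuous_on_mu_C: "continuous_on S (\<lambda>p. mu_C (fst p) (snd p) X)"
  unfolding mu_C_def matrix_vector_mult_def vec_lambda_beta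
  by (intro continuous_intros; simp)

lemma closed_level_set:
  fixes G :: "(complex^'n^'n) set"
  shows "closed (level_set G \<alpha>)"
proof -
  have "level_set G \<alpha> = (\<Inter>X\<in>lie_alg G. {p. mu_R (fst p) (snd p) X = \<alpha> X})
      \<inter> (\<Inter>X\<in>lie_alg_C G. {p. mu_C (fst p) (snd p) X = 0})"
    unfolding level_set_def by auto
  moreover have "closed {p. mu_R (fst p) (snd p) X = \<alpha> X}" for X :: "complex^'n^'n"
    by (rule closed_Collect_eq[OF continuous_on_mu_R continuous_on_const])
  moreover have "closed {p. mu_C (fst p) (snd p) X = 0}" for X :: "complex^'n^'n"
    by (rule closed_Collect_eq[OF continuous_on_mu_C continuous_on_const])
  ultimately show ?thesis
    by (simp add: closed_INT closed_Int)
qed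

definition partition_map :: "'a set \<Rightarrow> ('a \<Rightarrow> 'a set) \<Rightarrow> bool" where
  "partition_map S q \<longleftrightarrow> (\<forall>x\<in>S. x \<in> q x \<and> q x \<subseteq> S \<and> (\<forall>y\<in>q x. q y = q x))"

lemma partition_mapD:
  assumes "partition_map S q" "x \<in> S"
  shows partition_map_mem_self: "x \<in> q x"
    and partition_map_subset: "q x \<subseteq> S"
    and partition_map_eq: "y \<in> q x \<Longrightarrow> q y = q x"
  using assms unfolding partition_map_def by blast+

lemma partition_map_Union_image: "partition_map S q \<Longrightarrow> \<Union>(q ` S) = S"
  using partition_map_mem_self partition_map_subset by fast

locale unitary_matrix_group =
  fixes G :: "(complex^'n^'n) set"
  assumes compact_unitary_group: "compact_unitary_group G"
begin

lemma unitary_of_mem: "g \<in> G \<Longrightarrow> unitary_mat g"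
  using compact_unitary_group unfolding compact_unitary_group_def by blast

lemma one_mem: "mat 1 \<in> G"
  using compact_unitary_group unfolding compact_unitary_group_def by blast

lemma mult_mem: "g \<in> G \<Longrightarrow> h \<in> G \<Longrightarrow> g ** h \<in> G"
  using compact_unitary_group unfolding compact_unitary_group_def by blast

lemma adjoint_mem: "g \<in> G \<Longrightarrow> adjoint_mat g \<in> G"
  using compact_unitary_group unitary_matrix_inv unitary_of_mem
  unfolding compact_unitary_group_def by metis

lemma orbit_eq: "orbit G p = {(g *v fst p, cnj_mat g *v snd p) | g. g \<in> G}"
  unfolding orbit_def
  by (intro Collect_cong ex_cong1) (metis unitary_of_mem unitary_matrix_inv transpose_adjoint_mat)

lemma mem_orbit_self: "p \<in> orbit G p"
  unfolding orbit_eq using one_mem by force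

lemma orbit_eq_of_mem:
  assumes "q \<in> orbit G p"
  shows "orbit G q = orbit G p"
proof -
  obtain h where h: "h \<in> G" "q = (h *v fst p, cnj_mat h *v snd p)"
    using assms unfolding orbit_eq by blast
  have act: "(g *v fst q, cnj_mat g *v snd q) = ((g ** h) *v fst p, cnj_mat (g ** h) *v snd p)" for g
    using h by (simp add: matrix_vector_mul_assoc cnj_mat_mult)
  show ?thesis
  proof
    show "orbit G q \<subseteq> orbit G p"
      unfolding orbit_eq using act mult_mem h(1) by fastforce
    show "orbit G p \<subseteq> orbit G q"
      unfolding orbit_eq
    proof clarify
      fix k assume k: "k \<in> G"
      have "(k ** adjoint_mat h) ** h = k"
        using unitary_of_mem[OF h(1)] by (simp add: unitary_mat_def flip: matrix_mul_assoc)
      then show "\<exists>g. (k *v fst p, cnj_mat k *v snd p) = (g *v fst q, cnj_mat g *v snd q) \<and> g \<in> G"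
        using act[of "k ** adjoint_mat h"] mult_mem[OF k adjoint_mem[OF h(1)]] by metis
    qed
  qed
qed

lemma lie_alg_conj:
  assumes "X \<in> lie_alg G" "g \<in> G"
  shows "adjoint_mat g ** X ** g \<in> lie_alg G"
proof -
  obtain c where c: "c 0 = mat 1" "\<forall>t. c t \<in> G" "(c has_vector_derivative X) (at 0)"
    using assms(1) unfolding lie_alg_def by blast
  define c' where "c' t = adjoint_mat g ** c t ** g" for t
  have "c' 0 = mat 1"
    using c(1) unitary_of_mem[OF assms(2)] by (simp add: c'_def unitary_mat_def)
  moreover have "\<forall>t. c' t \<in> G"
    using c(2) mult_mem adjoint_mem assms(2) by (simp add: c'_def)
  moreover have "(c' has_vector_derivative adjoint_mat g ** X ** g) (at 0)"
    unfolding c'_def by (rule bounded_linear.has_vector_derivative[OF bounded_linear_matrix_sandwich c(3)])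
  ultimately show ?thesis
    unfolding lie_alg_def by blast
qed

lemma lie_alg_C_conj:
  assumes "X \<in> lie_alg_C G" "g \<in> G"
  shows "adjoint_mat g ** X ** g \<in> lie_alg_C G"
proof -
  obtain A B where AB: "X = A + (\<chi> i j. \<i> * B $ i $ j)" "A \<in> lie_alg G" "B \<in> lie_alg G"
    using assms(1) unfolding lie_alg_C_def by blast
  have "adjoint_mat g ** X ** g
      = adjoint_mat g ** A ** g + (\<chi> i j. \<i> * (adjoint_mat g ** B ** g) $ i $ j)"
    unfolding AB(1)
    by (simp add: matrix_add_ldistrib matrix_add_rdistrib matrix_mul_scale_left matrix_mul_scale_right)
  then show ?thesis
    unfolding lie_alg_C_def using lie_alg_conj AB assms(2) by blast
qed

lemma level_set_invariant:
  assumes "central G \<alpha>" and "(z, w) \<in> level_set G \<alpha>" and g: "g \<in> G"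
  shows "(g *v z, cnj_mat g *v w) \<in> level_set G \<alpha>"
proof -
  have "mu_R (g *v z) (cnj_mat g *v w) X = \<alpha> X" if X: "X \<in> lie_alg G" for X
  proof -
    have "mu_R (g *v z) (cnj_mat g *v w) X = mu_R z w (adjoint_mat g ** X ** g)"
      by (simp add: mu_R_def mu_matrix_vector_mult mu_dual_cnj_mat_vector_mult)
    also have "\<dots> = \<alpha> (adjoint_mat g ** X ** g)"
      using assms(2) lie_alg_conj[OF X g] unfolding level_set_def by blast
    also have "\<dots> = \<alpha> X"
      \<comment> \<open>centrality, applied to adjoint_mat g, whose matrix inverse is g\<close>
      using assms(1) adjoint_mem[OF g] X unitary_matrix_inv[OF unitary_adjoint_mat[OF unitary_of_mem[OF g]]]
      unfolding central_def by (metis adjoint_mat_adjoint_mat)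
    finally show ?thesis .
  qed
  moreover have "mu_C (g *v z) (cnj_mat g *v w) X = 0" if "X \<in> lie_alg_C G" for X
    using assms(2) lie_alg_C_conj[OF that g] unfolding level_set_def
    by (simp add: mu_C_matrix_vector_mult)
  ultimately show ?thesis
    unfolding level_set_def by simp
qed

lemma partition_map_orbit:
  assumes "central G \<alpha>"
  shows "partition_map (level_set G \<alpha>) (orbit G)"
  unfolding partition_map_def
  using mem_orbit_self orbit_eq_of_mem level_set_invariant[OF assms]
  by (auto simp: orbit_eq)

lemma Phi_orbit: "Phi (orbit G p) = norm (snd p) ^ 2 / 2"
proof -
  have "norm (snd q) = norm (snd p)" if "q \<in> orbit G p" for q
    using that unitary_of_mem unitary_norm_cnj_mat_vector_mult unfolding orbit_eq by force
  moreover have "(SOME q. q \<in> orbit G p) \<in> orbit G p"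
    using mem_orbit_self by (rule someI)
  ultimately show ?thesis
    unfolding Phi_def Let_def by simp
qed

end

definition partition_quotient_topology :: "'a topology \<Rightarrow> ('a \<Rightarrow> 'a set) \<Rightarrow> 'a set topology" where
  "partition_quotient_topology X q = topology (\<lambda>U. U \<subseteq> q ` topspace X \<and> openin X (\<Union>U))"

lemma openin_partition_quotient_topology:
  assumes "partition_map (topspace X) q"
  shows "openin (partition_quotient_topology X q) = (\<lambda>U. U \<subseteq> q ` topspace X \<and> openin X (\<Union>U))"
proof -
  have Union_Int: "\<Union>(S \<inter> T) = \<Union>S \<inter> \<Union>T" if ST: "S \<subseteq> q ` topspace X" "T \<subseteq> q ` topspace X" for S T
  proof
    show "\<Union>(S \<inter> T) \<subseteq> \<Union>S \<inter> \<Union>T"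
      by blast
    show "\<Union>S \<inter> \<Union>T \<subseteq> \<Union>(S \<inter> T)"
    proof
      fix x assume "x \<in> \<Union>S \<inter> \<Union>T"
      then obtain a b where "x \<in> q a" "q a \<in> S" "a \<in> topspace X" "x \<in> q b" "q b \<in> T" "b \<in> topspace X"
        using ST by blast
      moreover from this have "q a = q b"
        using partition_map_eq[OF assms] by metis
      ultimately show "x \<in> \<Union>(S \<inter> T)" by (metis IntI UnionI)
    qed
  qed
  have "istopology (\<lambda>U. U \<subseteq> q ` topspace X \<and> openin X (\<Union>U))"
    unfolding istopology_def
  proof (rule conjI; intro allI impI)
    fix S T
    assume "S \<subseteq> q ` topspace X \<and> openin X (\<Union>S)" "T \<subseteq> q ` topspace X \<and> openin X (\<Union>T)"
    then show "S \<inter> T \<subseteq> q ` topspace X \<and> openin X (\<Union>(S \<inter> T))"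
      using Union_Int[of S T] by (metis le_infI1 openin_Int)
  next
    fix \<K> :: "'a set set set"
    assume \<K>: "\<forall>K\<in>\<K>. K \<subseteq> q ` topspace X \<and> openin X (\<Union>K)"
    have "openin X (\<Union>(Union ` \<K>))"
      using \<K> by (intro openin_Union) blast
    moreover have "\<Union>(\<Union>\<K>) = \<Union>(Union ` \<K>)"
      by blast
    ultimately show "\<Union>\<K> \<subseteq> q ` topspace X \<and> openin X (\<Union>(\<Union>\<K>))"
      using \<K> by (metis Sup_least)
  qed
  then show ?thesis
    unfolding partition_quotient_topology_def by simp
qed

lemma topspace_partition_quotient_topology:
  assumes "partition_map (topspace X) q"
  shows "topspace (partition_quotient_topology X q) = q ` topspace X"
proof -
  have "openin X (\<Union>(q ` topspace X))"
    by (simp add: partition_map_Union_image[OF assms])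
  then have "openin (partition_quotient_topology X q) (q ` topspace X)"
    by (simp add: openin_partition_quotient_topology[OF assms])
  moreover have "topspace (partition_quotient_topology X q) \<subseteq> q ` topspace X"
    using openin_topspace[of "partition_quotient_topology X q"]
    by (simp add: openin_partition_quotient_topology[OF assms])
  ultimately show ?thesis
    using openin_subset by blast
qed

lemma continuous_map_partition_quotient:
  assumes "partition_map (topspace X) q"
  shows "continuous_map X (partition_quotient_topology X q) q"
  unfolding continuous_map
proof (intro conjI allI impI)
  show "q ` topspace X \<subseteq> topspace (partition_quotient_topology X q)"
    by (simp add: topspace_partition_quotient_topology[OF assms])
  fix U assume "openin (partition_quotient_topology X q) U"
  then have U: "U \<subseteq> q ` topspace X" "openin X (\<Union>U)"
    by (simp_all add: openin_partition_quotient_topology[OF assms])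
  have "{x \<in> topspace X. q x \<in> U} = \<Union>U"
  proof
    show "{x \<in> topspace X. q x \<in> U} \<subseteq> \<Union>U"
      using partition_map_mem_self[OF assms] by blast
    show "\<Union>U \<subseteq> {x \<in> topspace X. q x \<in> U}"
    proof
      fix x assume "x \<in> \<Union>U"
      then obtain a where a: "a \<in> topspace X" "x \<in> q a" "q a \<in> U"
        using U(1) by blast
      then have "x \<in> topspace X" "q x = q a"
        using partition_map_subset[OF assms] partition_map_eq[OF assms] by blast+
      then show "x \<in> {x \<in> topspace X. q x \<in> U}"
        using a(3) by simp
    qed
  qed
  then show "openin X {x \<in> topspace X. q x \<in> U}"
    using U(2) by simp
qed

lemma proper_fn_descend:
  assumes "continuous_map X Y q" "q ` topspace X = topspace Y"
    and "\<And>x. x \<in> topspace X \<Longrightarrow> f (q x) = g x" and "proper_fn X Z g"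
  shows "proper_fn Y Z f"
  unfolding proper_fn_def
proof (intro allI impI)
  fix K assume "compactin Z K"
  then have "compactin X {x \<in> topspace X. g x \<in> K}"
    using assms(4) unfolding proper_fn_def by blast
  then have "compactin Y (q ` {x \<in> topspace X. g x \<in> K})"
    using assms(1) by (rule image_compactin)
  moreover have "{y \<in> topspace Y. f y \<in> K} = q ` {x \<in> topspace X. g x \<in> K}"
  proof
    show "{y \<in> topspace Y. f y \<in> K} \<subseteq> q ` {x \<in> topspace X. g x \<in> K}"
    proof clarify
      fix y assume y: "y \<in> topspace Y" "f y \<in> K"
      then obtain x where x: "x \<in> topspace X" "y = q x"
        using assms(2) by (metis imageE)
      then have "g x \<in> K"
        using y(2) assms(3) by simp
      then show "y \<in> q ` {x \<in> topspace X. g x \<in> K}"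
        using x by blast
    qed
    show "q ` {x \<in> topspace X. g x \<in> K} \<subseteq> {y \<in> topspace Y. f y \<in> K}"
      using assms(3) by (auto simp flip: assms(2))
  qed
  ultimately show "compactin Y {y \<in> topspace Y. f y \<in> K}"
    by simp
qed

lemma mu_dual_bounded_on_cball: "\<exists>b. \<forall>X w. norm w \<le> R \<longrightarrow> \<bar>mu_dual w X\<bar> \<le> b X"
proof -
  have "\<exists>b. \<forall>w. norm w \<le> R \<longrightarrow> \<bar>mu_dual w X\<bar> \<le> b" for X
  proof -
    have "compact ((\<lambda>w. mu_dual w X) ` cball 0 R)"
      by (intro compact_continuous_image continuous_on_mu_dual compact_cball)
    then show ?thesis
      using compact_imp_bounded bounded_real by (metis image_eqI mem_cball_0)
  qed
  then show ?thesis
    by metis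
qed

lemma compact_fst_level_set_bounded:
  fixes G :: "(complex^'n^'n) set"
  assumes "proper_fn euclidean (dual_top G) (\<lambda>z. restrict (mu z) (lie_alg G))"
  obtains Z where "compact Z" "\<And>z w. (z, w) \<in> level_set G \<alpha> \<Longrightarrow> norm w \<le> R \<Longrightarrow> z \<in> Z"
proof -
  obtain b where b: "\<And>(X :: complex^'n^'n) w. norm w \<le> R \<Longrightarrow> \<bar>mu_dual w X\<bar> \<le> b X"
    using mu_dual_bounded_on_cball[of R] by blast
  define box where "box = PiE (lie_alg G) (\<lambda>X. {\<alpha> X - b X .. \<alpha> X + b X})"
  have "compactin (dual_top G) box"
    unfolding dual_top_def box_def compactin_PiE by simp
  then have "compact {z. restrict (mu z) (lie_alg G) \<in> box}"
    using assms unfolding proper_fn_def by simp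
  moreover have "restrict (mu z) (lie_alg G) \<in> box"
    if "(z, w) \<in> level_set G \<alpha>" "norm w \<le> R" for z w
  proof -
    have "mu z X = \<alpha> X + mu_dual w X" if "X \<in> lie_alg G" for X
      using \<open>(z, w) \<in> level_set G \<alpha>\<close> that unfolding level_set_def mu_R_def by auto
    then show ?thesis
      using b[OF \<open>norm w \<le> R\<close>] unfolding box_def by (force simp: abs_le_iff)
  qed
  ultimately show ?thesis
    using that by blast
qed

lemma proper_fn_level_set_half_norm_sq:
  fixes G :: "(complex^'n^'n) set"
  assumes "proper_fn euclidean (dual_top G) (\<lambda>z. restrict (mu z) (lie_alg G))"
  shows "proper_fn (top_of_set (level_set G \<alpha>)) euclideanreal (\<lambda>p. norm (snd p) ^ 2 / 2)"
  unfolding proper_fn_def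
proof (intro allI impI)
  fix K assume "compactin euclideanreal K"
  then have K: "compact K"
    by simp
  then obtain R where R: "\<And>x. x \<in> K \<Longrightarrow> \<bar>x\<bar> \<le> R"
    using compact_imp_bounded bounded_real by metis
  define C where "C = {p \<in> level_set G \<alpha>. norm (snd p) ^ 2 / 2 \<in> K}"
  have w_bound: "norm (snd p) \<le> sqrt (2 * R)" if "p \<in> C" for p
    using R[of "norm (snd p) ^ 2 / 2"] that unfolding C_def by (auto intro: real_le_rsqrt)
  obtain Z where Z: "compact Z"
    "\<And>z w. (z, w) \<in> level_set G \<alpha> \<Longrightarrow> norm w \<le> sqrt (2 * R) \<Longrightarrow> z \<in> Z"
    using compact_fst_level_set_bounded[OF assms] by metis
  have "C \<subseteq> Z \<times> cball 0 (sqrt (2 * R))"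
  proof
    fix p assume "p \<in> C"
    then show "p \<in> Z \<times> cball 0 (sqrt (2 * R))"
      using Z(2)[of "fst p" "snd p"] w_bound[of p] unfolding C_def by (auto simp: mem_Times_iff)
  qed
  moreover have "closed C"
  proof -
    have "closed ((\<lambda>p::(complex^'n) \<times> (complex^'n). norm (snd p) ^ 2 / 2) -` K)"
      by (rule continuous_closed_vimage[OF compact_imp_closed[OF K]]) (intro continuous_intros; simp)
    then show ?thesis
      unfolding C_def using closed_level_set[of G \<alpha>] by (simp add: Collect_conj_eq closed_Int vimage_def)
  qed
  ultimately have "compact C"
    using Z(1) compact_Int_closed[of "Z \<times> cball 0 (sqrt (2 * R))" C]
    by (simp add: compact_Times inf.absorb2)
  then show "compactin (top_of_set (level_set G \<alpha>))
      {p \<in> topspace (top_of_set (level_set G \<alpha>)). norm (snd p) ^ 2 / 2 \<in> K}"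
    by (simp add: compactin_subtopology C_def)
qed

theorem mainTheorem2:
  fixes G :: "(complex^'n^'n) set" and \<alpha> :: "complex^'n^'n \<Rightarrow> real"
  assumes "compact_unitary_group G"
    and "central G \<alpha>"
    and "proper_fn euclidean (dual_top G) (\<lambda>z. restrict (mu z) (lie_alg G))"
  shows "proper_fn (hk_quotient_top G \<alpha>) euclideanreal Phi"
proof -
  interpret unitary_matrix_group G
    using assms(1) by unfold_locales
  let ?L = "top_of_set (level_set G \<alpha>)"
  have partition: "partition_map (topspace ?L) (orbit G)"
    using partition_map_orbit[OF assms(2)] by simp
  have "hk_quotient_top G \<alpha> = partition_quotient_topology ?L (orbit G)"
    unfolding hk_quotient_top_def partition_quotient_topology_def hk_quotient_def by simp
  moreover have "proper_fn (partition_quotient_topology ?L (orbit G)) euclideanreal Phi"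
  proof (rule proper_fn_descend)
    show "continuous_map ?L (partition_quotient_topology ?L (orbit G)) (orbit G)"
      using partition by (rule continuous_map_partition_quotient)
    show "orbit G ` topspace ?L = topspace (partition_quotient_topology ?L (orbit G))"
      using partition by (simp add: topspace_partition_quotient_topology)
    show "Phi (orbit G p) = norm (snd p) ^ 2 / 2" for p
      by (rule Phi_orbit)
    show "proper_fn ?L euclideanreal (\<lambda>p. norm (snd p) ^ 2 / 2)"
      using assms(3) by (rule proper_fn_level_set_half_norm_sq)
  qed
  ultimately show ?thesis
    by simp
qed

end
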